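(* Let $\Omega\subset\mathbb{R}^d$ be a nonempty open bounded convex set, $U\subset\mathbb{R}^m$ compact, and $f:\overline\Omega\times U\to\mathbb{R}^d$ continuous. For $h>0$ and $x\in\overline\Omega$ let $U_h(x)=\{u\in U:\ x+hf(x,u)\in\Omega\}$. Then there exists $h>0$ such that $U_h(x)\neq\emptyset$ for every $x\in\overline\Omega$ if and only if $$\forall x\in\partial\Omega\ \ \exists u\in U:\quad f(x,u)\in\operatorname{int}T_{\overline\Omega}(x),$$ where $\operatorname{int}T_{\overline\Omega}(x):=\bigcup_{s>0}\frac1s(\Omega-x)$.
   Context: $\frac1s(\Omega-x)=\{(z-x)/s:z\in\Omega\}$; $\operatorname{int}T_{\overline\Omega}(x)$ denotes the interior of the tangent cone to the convex set $\overline\Omega$ at $x$, which for convex $\Omega$ equals $\bigcup_{s>0}\frac1s(\Omega-x)$. *)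

theory Defs
  imports "HOL-Analysis.Analysis"
begin

definition int_tangent_cone :: "'a::real_normed_vector set \<Rightarrow> 'a \<Rightarrow> 'a set" where
  "int_tangent_cone \<Omega> x = (\<Union>s\<in>{s::real. s > 0}. (\<lambda>z. (1/s) *\<^sub>R (z - x)) ` \<Omega>)"

definition admissible_controls ::
  "'a::real_normed_vector set \<Rightarrow> 'b set \<Rightarrow> ('a \<Rightarrow> 'b \<Rightarrow> 'a) \<Rightarrow> real \<Rightarrow> 'a \<Rightarrow> 'b set" where
  "admissible_controls \<Omega> U f h x = {u \<in> U. x + h *\<^sub>R f x u \<in> \<Omega>}"

end

theory Submission
  imports Defs
begin

text \<open>A control is admissible for some step size exactly when its velocity lies in the interior
  of the tangent cone, so the forward implication is immediate. Conversely, every point of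
  \<open>closure \<Omega>\<close> has a control and a step entering \<open>\<Omega>\<close>; by continuity the same control and step
  work on a neighbourhood, and compactness of \<open>closure \<Omega>\<close> leaves finitely many neighbourhoods.
  Convexity makes admissible steps closed under shrinking, so the least of the finitely many
  step sizes works everywhere.\<close>

lemma mem_int_tangent_cone_iff:
  "v \<in> int_tangent_cone \<Omega> x \<longleftrightarrow> (\<exists>s>0. x + s *\<^sub>R v \<in> \<Omega>)"
proof
  assume "v \<in> int_tangent_cone \<Omega> x"
  then obtain s z where "s > 0" "z \<in> \<Omega>" "v = (1/s) *\<^sub>R (z - x)"
    unfolding int_tangent_cone_def by blast
  then show "\<exists>s>0. x + s *\<^sub>R v \<in> \<Omega>" by auto
next
  assume "\<exists>s>0. x + s *\<^sub>R v \<in> \<Omega>"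
  then obtain s where "s > 0" "x + s *\<^sub>R v \<in> \<Omega>" by blast
  moreover have "v = (1/s) *\<^sub>R ((x + s *\<^sub>R v) - x)" using \<open>s > 0\<close> by simp
  ultimately show "v \<in> int_tangent_cone \<Omega> x" unfolding int_tangent_cone_def by blast
qed

lemma int_tangent_cone_open_eq_UNIV:
  assumes "open \<Omega>" "x \<in> \<Omega>"
  shows "int_tangent_cone \<Omega> x = UNIV"
proof -
  have "\<exists>s>0. x + s *\<^sub>R v \<in> \<Omega>" for v
  proof -
    obtain e where "e > 0" "ball x e \<subseteq> \<Omega>" using assms open_contains_ball by blast
    have "norm v + 1 > 0" by (simp add: add_nonneg_pos)
    define s where "s = e / (norm v + 1)"
    have "s > 0" using \<open>e > 0\<close> \<open>norm v + 1 > 0\<close> by (simp add: s_def)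
    have "norm (s *\<^sub>R v) < s * (norm v + 1)"
      using \<open>s > 0\<close> by simp
    also have "\<dots> = e" using \<open>norm v + 1 > 0\<close> by (simp add: s_def)
    finally
    have "x + s *\<^sub>R v \<in> ball x e" by (simp add: dist_norm)
    then show ?thesis using \<open>s > 0\<close> \<open>ball x e \<subseteq> \<Omega>\<close> by blast
  qed
  then show ?thesis by (auto simp: mem_int_tangent_cone_iff)
qed

lemma open_convex_step_shrink:
  fixes \<Omega> :: "'a::euclidean_space set"
  assumes "open \<Omega>" "convex \<Omega>" "x \<in> closure \<Omega>" "x + s *\<^sub>R v \<in> \<Omega>" "0 < t" "t \<le> s"
  shows "x + t *\<^sub>R v \<in> \<Omega>"
proof -
  have "x - (t/s) *\<^sub>R (x - (x + s *\<^sub>R v)) \<in> interior \<Omega>"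
    by (rule mem_interior_closure_convex_shrink) (use assms interior_open in auto)
  moreover have "x - (t/s) *\<^sub>R (x - (x + s *\<^sub>R v)) = x + t *\<^sub>R v"
    using assms by (simp add: algebra_simps)
  ultimately show ?thesis using assms interior_open by auto
qed

lemma continuous_step_into_open_nhd:
  fixes f :: "'a::real_normed_vector \<Rightarrow> 'b::topological_space \<Rightarrow> 'a"
  assumes "continuous_on (S \<times> U) (\<lambda>(x, u). f x u)" "open \<Omega>"
    and "u \<in> U" "x \<in> S" "x + s *\<^sub>R f x u \<in> \<Omega>"
  shows "\<exists>V. open V \<and> x \<in> V \<and> (\<forall>y\<in>V \<inter> S. y + s *\<^sub>R f y u \<in> \<Omega>)"
proof -
  have "continuous_on S (\<lambda>y. (\<lambda>(x, u). f x u) (y, u))"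
    by (rule continuous_on_compose2[OF assms(1)]) (auto intro!: continuous_intros simp: \<open>u \<in> U\<close>)
  then have "continuous_on S (\<lambda>y. y + s *\<^sub>R f y u)"
    by (auto intro!: continuous_intros)
  then obtain V where "open V" "V \<inter> S = (\<lambda>y. y + s *\<^sub>R f y u) -` \<Omega> \<inter> S"
    using \<open>open \<Omega>\<close> unfolding continuous_on_open_invariant by blast
  then show ?thesis using assms(4,5) by blast
qed

lemma exists_step_into_open:
  assumes "open \<Omega>" "U \<noteq> {}" "x \<in> closure \<Omega>"
    and "\<forall>x\<in>frontier \<Omega>. \<exists>u\<in>U. f x u \<in> int_tangent_cone \<Omega> x"
  shows "\<exists>u\<in>U. \<exists>s>0. x + s *\<^sub>R f x u \<in> \<Omega>"
proof (cases "x \<in> \<Omega>")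
  case True
  then show ?thesis
    using \<open>U \<noteq> {}\<close> int_tangent_cone_open_eq_UNIV[OF \<open>open \<Omega>\<close>]
    by (auto simp flip: mem_int_tangent_cone_iff)
next
  case False
  then have "x \<in> frontier \<Omega>"
    using \<open>x \<in> closure \<Omega>\<close> by (simp add: frontier_def interior_open[OF \<open>open \<Omega>\<close>])
  then show ?thesis using assms(4) by (auto simp: mem_int_tangent_cone_iff)
qed

lemma compact_uniform_step:
  fixes Q :: "real \<Rightarrow> 'a::topological_space \<Rightarrow> bool"
  assumes "compact K"
    and local: "\<And>x. x \<in> K \<Longrightarrow> \<exists>s>0. \<exists>V. open V \<and> x \<in> V \<and> (\<forall>y\<in>V \<inter> K. Q s y)"
    and shrink: "\<And>y s t. y \<in> K \<Longrightarrow> Q s y \<Longrightarrow> 0 < t \<Longrightarrow> t \<le> s \<Longrightarrow> Q t y"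
  shows "\<exists>h>0. \<forall>y\<in>K. Q h y"
proof -
  obtain s V where sV: "\<And>x. x \<in> K \<Longrightarrow> s x > 0 \<and> open (V x) \<and> x \<in> V x \<and> (\<forall>y\<in>V x \<inter> K. Q (s x) y)"
    using local by metis
  obtain C where C: "C \<subseteq> K" "finite C" "K \<subseteq> (\<Union>x\<in>C. V x)"
    by (rule compactE_image[OF \<open>compact K\<close>, of K V]) (use sV in blast)+
  \<comment> \<open>The \<open>1\<close> keeps the minimum meaningful when \<open>K\<close> is empty.\<close>
  define h where "h = Min (insert 1 (s ` C))"
  have "h > 0" unfolding h_def using C sV by (subst Min_gr_iff) auto
  moreover have "Q h y" if "y \<in> K" for y
  proof -
    obtain x where "x \<in> C" "y \<in> V x" using C(3) \<open>y \<in> K\<close> by blast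
    then have "Q (s x) y" using sV C(1) \<open>y \<in> K\<close> by blast
    moreover have "h \<le> s x" unfolding h_def using C(2) \<open>x \<in> C\<close> by (intro Min_le) auto
    ultimately show "Q h y" using shrink \<open>y \<in> K\<close> \<open>h > 0\<close> by blast
  qed
  ultimately show ?thesis by blast
qed

theorem proposition2p4:
  fixes \<Omega> :: "'d::euclidean_space set"
    and U :: "'m::euclidean_space set"
    and f :: "'d \<Rightarrow> 'm \<Rightarrow> 'd"
  assumes "\<Omega> \<noteq> {}" and "open \<Omega>" and "bounded \<Omega>" and "convex \<Omega>"
    and "compact U"
    and "continuous_on (closure \<Omega> \<times> U) (\<lambda>(x, u). f x u)"
  shows "(\<exists>h>0. \<forall>x\<in>closure \<Omega>. admissible_controls \<Omega> U f h x \<noteq> {}) \<longleftrightarrow>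
         (\<forall>x\<in>frontier \<Omega>. \<exists>u\<in>U. f x u \<in> int_tangent_cone \<Omega> x)"
  (is "?uniform \<longleftrightarrow> ?boundary")
proof
  assume ?uniform
  then show ?boundary
    unfolding admissible_controls_def mem_int_tangent_cone_iff frontier_def by blast
next
  assume ?boundary
  have "frontier \<Omega> \<noteq> {}"
    using assms(1,3) frontier_not_empty not_bounded_UNIV by blast
  then have "U \<noteq> {}" using \<open>?boundary\<close> by blast
  have "\<exists>s>0. \<exists>V. open V \<and> x \<in> V \<and> (\<forall>y\<in>V \<inter> closure \<Omega>. \<exists>u\<in>U. y + s *\<^sub>R f y u \<in> \<Omega>)"
    if "x \<in> closure \<Omega>" for x
    using exists_step_into_open[OF \<open>open \<Omega>\<close> \<open>U \<noteq> {}\<close> that \<open>?boundary\<close>]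
      continuous_step_into_open_nhd[OF assms(6) \<open>open \<Omega>\<close> _ that] by meson
  moreover have "compact (closure \<Omega>)" using \<open>bounded \<Omega>\<close> by (simp add: compact_closure)
  ultimately have "\<exists>h>0. \<forall>y\<in>closure \<Omega>. \<exists>u\<in>U. y + h *\<^sub>R f y u \<in> \<Omega>"
    using open_convex_step_shrink[OF \<open>open \<Omega>\<close> \<open>convex \<Omega>\<close>]
    by (intro compact_uniform_step) blast+
  then show ?uniform unfolding admissible_controls_def by blast
qed

end
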